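(* For a nonzero nondegenerate m-triangle $\mathbf X$ with moment of inertia $I$, the following are equivalent: (a) its shape is a pole of the shape sphere, i.e. $m_j|\mathbf a_j|^2=\frac12(1-m_j)I$ for $j=1,2,3$; (b) $\lambda_1=\lambda_2$; (c) its area equals $\Delta_{\max}=\frac{I}{4\sqrt{m_1m_2m_3}}$, which is the maximal area among all m-triangles with the same moment of inertia $I$. In particular, the poles are the shapes uniquely characterized by (b) or (c).
   Context: Masses $m_1,m_2,m_3>0$, $m_1+m_2+m_3=1$; m-triangle $\mathbf X=(\mathbf a_1,\mathbf a_2,\mathbf a_3)$, $\mathbf a_i\in\mathbb R^3$, $\sum m_i\mathbf a_i=0$; $I=\sum m_i|\mathbf a_i|^2$; $\Delta$ is its area; $\lambda_1\le\lambda_2$ are the two smallest eigenvalues of the inertia tensor $B_{\mathbf X}(\mathbf u,\mathbf v)=\sum m_j(\mathbf u\times\mathbf a_j)\cdot(\mathbf v\times\mathbf a_j)$. The poles of the shape sphere (oriented m-triangles of size $I=1$ modulo rotation) are the shapes of the positively or negatively oriented m-triangles with $m_j|\mathbf a_j|^2=(1-m_j)/2$. *)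

theory Defs
  imports "HOL-Analysis.Analysis" "HOL-Computational_Algebra.Polynomial"
begin

definition mass_ok :: "real \<Rightarrow> real \<Rightarrow> real \<Rightarrow> bool" where
  "mass_ok m1 m2 m3 \<longleftrightarrow> m1 > 0 \<and> m2 > 0 \<and> m3 > 0 \<and> m1 + m2 + m3 = 1"

definition m_triangle :: "real \<Rightarrow> real \<Rightarrow> real \<Rightarrow> real^3 \<Rightarrow> real^3 \<Rightarrow> real^3 \<Rightarrow> bool" where
  "m_triangle m1 m2 m3 a1 a2 a3 \<longleftrightarrow> m1 *\<^sub>R a1 + m2 *\<^sub>R a2 + m3 *\<^sub>R a3 = 0"

definition inertia :: "real \<Rightarrow> real \<Rightarrow> real \<Rightarrow> real^3 \<Rightarrow> real^3 \<Rightarrow> real^3 \<Rightarrow> real" where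
  "inertia m1 m2 m3 a1 a2 a3 = m1 * (norm a1)\<^sup>2 + m2 * (norm a2)\<^sup>2 + m3 * (norm a3)\<^sup>2"

definition tri_area :: "real^3 \<Rightarrow> real^3 \<Rightarrow> real^3 \<Rightarrow> real" where
  "tri_area a1 a2 a3 = norm (cross3 (a2 - a1) (a3 - a1)) / 2"

definition inertia_form :: "real \<Rightarrow> real \<Rightarrow> real \<Rightarrow> real^3 \<Rightarrow> real^3 \<Rightarrow> real^3 \<Rightarrow> real^3 \<Rightarrow> real^3 \<Rightarrow> real" where
  "inertia_form m1 m2 m3 a1 a2 a3 u v =
     m1 * (cross3 u a1 \<bullet> cross3 v a1) + m2 * (cross3 u a2 \<bullet> cross3 v a2)
     + m3 * (cross3 u a3 \<bullet> cross3 v a3)"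

definition inertia_matrix :: "real \<Rightarrow> real \<Rightarrow> real \<Rightarrow> real^3 \<Rightarrow> real^3 \<Rightarrow> real^3 \<Rightarrow> real^3^3" where
  "inertia_matrix m1 m2 m3 a1 a2 a3 =
     (\<chi> i j. inertia_form m1 m2 m3 a1 a2 a3 (axis i 1) (axis j 1))"

definition char_poly3 :: "real^3^3 \<Rightarrow> real poly" where
  "char_poly3 A = det (\<chi> i j. (if i = j then [:0, 1:] else 0) - [:A $ i $ j:])"

definition sorted_eigenvalues :: "real^3^3 \<Rightarrow> real list" where
  "sorted_eigenvalues A = sorted_list_of_multiset (proots (char_poly3 A))"

definition lambda1 :: "real \<Rightarrow> real \<Rightarrow> real \<Rightarrow> real^3 \<Rightarrow> real^3 \<Rightarrow> real^3 \<Rightarrow> real" where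
  "lambda1 m1 m2 m3 a1 a2 a3 = sorted_eigenvalues (inertia_matrix m1 m2 m3 a1 a2 a3) ! 0"

definition lambda2 :: "real \<Rightarrow> real \<Rightarrow> real \<Rightarrow> real^3 \<Rightarrow> real^3 \<Rightarrow> real^3 \<Rightarrow> real" where
  "lambda2 m1 m2 m3 a1 a2 a3 = sorted_eigenvalues (inertia_matrix m1 m2 m3 a1 a2 a3) ! 1"

end

theory Submission
  imports Defs
begin

(* In the Jacobi coordinates z, y of the triangle the inertia tensor is I Id - (alpha z z^T + beta y y^T).
   Its characteristic polynomial therefore factors as (t - I) (t^2 - I t + 4 m1 m2 m3 Delta^2): the
   largest eigenvalue is I, and lambda1, lambda2 are the roots of the quadratic.  Its discriminant
   I^2 - 16 m1 m2 m3 Delta^2 equals (alpha |z|^2 - beta |y|^2)^2 + 4 alpha beta (z.y)^2 >= 0, which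
   gives the area bound.  Equality in it, lambda1 = lambda2 and the pole condition all amount to
   alpha |z|^2 = beta |y|^2 and z.y = 0, because the three pole defects m_j |a_j|^2 - (1 - m_j) I / 2
   are linear combinations of alpha |z|^2 - beta |y|^2 and z.y. *)

lemma cross3_inner_cross3:
  fixes u v a :: "real^3"
  shows "cross3 u a \<bullet> cross3 v a = (u \<bullet> v) * (a \<bullet> a) - (u \<bullet> a) * (v \<bullet> a)"
  by (simp add: cross3_def inner_vec_def sum_3 algebra_simps power2_eq_square)

lemma det_scalar_plus_two_rank_one:
  fixes z y :: "real^3" and u \<alpha> \<beta> :: real
  shows "det (\<chi> i j. (if i = j then u else 0) + \<alpha> * z$i * z$j + \<beta> * y$i * y$j)
     = u^3 + u\<^sup>2 * (\<alpha> * (z \<bullet> z) + \<beta> * (y \<bullet> y)) + u * (\<alpha> * \<beta> * (cross3 z y \<bullet> cross3 z y))"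
  unfolding det_3 by (simp add: cross3_def inner_vec_def sum_3; algebra)

lemma poly_char_poly3:
  fixes A :: "real^3^3"
  shows "poly (char_poly3 A) t = det (\<chi> i j. (if i = j then t else 0) - A$i$j)"
  unfolding char_poly3_def det_3 by (simp; algebra)

lemma sorted_eigenvalues_eq:
  assumes "r1 \<le> r2" "r2 \<le> r3"
    and "char_poly3 A = [:-r1, 1:] * [:-r2, 1:] * [:-r3, 1:]"
  shows "sorted_eigenvalues A = [r1, r2, r3]"
proof -
  have "proots (char_poly3 A) = {#r1, r2, r3#}"
    unfolding assms(3)
    by (simp add: proots_mult del: mult_pCons_left mult_pCons_right)
  then show ?thesis unfolding sorted_eigenvalues_def using assms(1,2) by simp
qed

lemma monic_quadratic_factor:
  fixes s p d :: real
  assumes "d\<^sup>2 = s\<^sup>2 - 4 * p"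
  shows "[:p, -s, 1:] = [:-((s - d) / 2), 1:] * [:-((s + d) / 2), 1:]"
  using assms by (simp add: field_simps power2_eq_square)

lemma le_div_four_sqrt_iff:
  fixes k I x :: real
  assumes "k > 0" "I \<ge> 0" "x \<ge> 0"
  shows "x \<le> I / (4 * sqrt k) \<longleftrightarrow> 16 * k * x\<^sup>2 \<le> I\<^sup>2"
    and "x = I / (4 * sqrt k) \<longleftrightarrow> 16 * k * x\<^sup>2 = I\<^sup>2"
proof -
  have sq: "16 * k * x\<^sup>2 = (4 * sqrt k * x)\<^sup>2"
    using assms(1) by (simp add: power_mult_distrib)
  have "4 * sqrt k * x \<ge> 0" using assms by simp
  then have "4 * sqrt k * x \<le> I \<longleftrightarrow> 16 * k * x\<^sup>2 \<le> I\<^sup>2"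
       and "4 * sqrt k * x = I \<longleftrightarrow> 16 * k * x\<^sup>2 = I\<^sup>2"
    unfolding sq using assms(2) by (auto simp: abs_le_square_iff power2_eq_iff_nonneg)
  then show "x \<le> I / (4 * sqrt k) \<longleftrightarrow> 16 * k * x\<^sup>2 \<le> I\<^sup>2"
        and "x = I / (4 * sqrt k) \<longleftrightarrow> 16 * k * x\<^sup>2 = I\<^sup>2"
    using assms(1) by (auto simp: field_simps)
qed

(* y is the second Jacobi vector a3 - (m1 a1 + m2 a2) / (m1 + m2), and (m1 + m2) z = a2 - a1 is the
   first one; this scaling keeps the vertices polynomial in z and y. *)
locale jacobi_coordinates =
  fixes m1 m2 m3 :: real and a1 a2 a3 z y :: "real^3"
  assumes masses: "mass_ok m1 m2 m3"
    and a1_eq: "a1 = -(m3 *\<^sub>R y) - m2 *\<^sub>R z"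
    and a2_eq: "a2 = -(m3 *\<^sub>R y) + m1 *\<^sub>R z"
    and a3_eq: "a3 = (m1 + m2) *\<^sub>R y"
begin

abbreviation I :: real where "I \<equiv> inertia m1 m2 m3 a1 a2 a3"
abbreviation \<Delta> :: real where "\<Delta> \<equiv> tri_area a1 a2 a3"

definition \<alpha> :: real where "\<alpha> = m1 * m2 * (m1 + m2)"
definition \<beta> :: real where "\<beta> = m3 * (m1 + m2)"

lemma masses_pos: "m1 > 0" "m2 > 0" "m3 > 0" and mass_sum: "m1 + m2 + m3 = 1"
  using masses unfolding mass_ok_def by auto

lemma \<alpha>_pos: "\<alpha> > 0" and \<beta>_pos: "\<beta> > 0"
  using masses_pos by (simp_all add: \<alpha>_def \<beta>_def)

lemma m_triangle: "m_triangle m1 m2 m3 a1 a2 a3"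
  unfolding m_triangle_def a1_eq a2_eq a3_eq by (simp add: algebra_simps)

lemma inertia_nonneg: "I \<ge> 0"
  using masses_pos unfolding inertia_def by simp

lemma inertia_jacobi: "I = \<alpha> * (z \<bullet> z) + \<beta> * (y \<bullet> y)"
proof -
  have m3: "m3 = 1 - m1 - m2" using mass_sum by simp
  show ?thesis
    unfolding inertia_def power2_norm_eq_inner \<alpha>_def \<beta>_def a1_eq a2_eq a3_eq
    by (simp add: inner_add_left inner_add_right inner_diff_left inner_diff_right inner_commute m3;
        algebra)
qed

lemma inertia_form_jacobi:
  "inertia_form m1 m2 m3 a1 a2 a3 u v
    = (u \<bullet> v) * I - (\<alpha> * (u \<bullet> z) * (v \<bullet> z) + \<beta> * (u \<bullet> y) * (v \<bullet> y))"
proof -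
  have m3: "m3 = 1 - m1 - m2" using mass_sum by simp
  show ?thesis
    unfolding inertia_jacobi
    unfolding inertia_form_def cross3_inner_cross3 \<alpha>_def \<beta>_def a1_eq a2_eq a3_eq
    by (simp add: inner_add_left inner_add_right inner_diff_left inner_diff_right inner_commute m3;
        algebra)
qed

lemma area_sq_jacobi: "4 * (m1 * m2 * m3) * \<Delta>\<^sup>2 = \<alpha> * \<beta> * (cross3 z y \<bullet> cross3 z y)"
proof -
  have "a2 - a1 = (m1 + m2) *\<^sub>R z" "a3 - a1 = y + m2 *\<^sub>R z"
    using mass_sum unfolding a1_eq a2_eq a3_eq
    by (simp_all add: algebra_simps flip: scaleR_add_left)
  then have "cross3 (a2 - a1) (a3 - a1) = (m1 + m2) *\<^sub>R cross3 z y"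
    by (simp add: cross_mult_left cross_add_right cross_mult_right)
  then have "2 * \<Delta> = (m1 + m2) * norm (cross3 z y)"
    unfolding tri_area_def using masses_pos by simp
  then have "4 * \<Delta>\<^sup>2 = (m1 + m2)\<^sup>2 * (cross3 z y \<bullet> cross3 z y)"
    by (metis power2_norm_eq_inner power_mult_distrib four_x_squared)
  then show ?thesis
    unfolding \<alpha>_def \<beta>_def by (simp add: power2_eq_square algebra_simps)
qed

lemma char_poly_inertia_matrix:
  "char_poly3 (inertia_matrix m1 m2 m3 a1 a2 a3) = [:-I, 1:] * [:4 * (m1 * m2 * m3) * \<Delta>\<^sup>2, -I, 1:]"
proof -
  have "poly (char_poly3 (inertia_matrix m1 m2 m3 a1 a2 a3)) t
      = poly ([:-I, 1:] * [:4 * (m1 * m2 * m3) * \<Delta>\<^sup>2, -I, 1:]) t" for t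
  proof -
    have shifted: "(\<chi> i j. (if i = j then t else 0) - inertia_matrix m1 m2 m3 a1 a2 a3 $ i $ j)
       = (\<chi> i j. (if i = j then t - I else 0) + \<alpha> * z$i * z$j + \<beta> * y$i * y$j)"
      unfolding inertia_matrix_def inertia_form_jacobi
      by (simp add: vec_eq_iff inner_axis_axis inner_axis' algebra_simps; simp add: axis_def)
    have "poly (char_poly3 (inertia_matrix m1 m2 m3 a1 a2 a3)) t
        = (t - I)^3 + (t - I)\<^sup>2 * (\<alpha> * (z \<bullet> z) + \<beta> * (y \<bullet> y))
          + (t - I) * (\<alpha> * \<beta> * (cross3 z y \<bullet> cross3 z y))"
      unfolding poly_char_poly3 shifted by (rule det_scalar_plus_two_rank_one)
    also have "\<dots> = (t - I)^3 + (t - I)\<^sup>2 * I + (t - I) * (4 * (m1 * m2 * m3) * \<Delta>\<^sup>2)"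
      unfolding inertia_jacobi[symmetric] area_sq_jacobi ..
    also have "\<dots> = poly ([:-I, 1:] * [:4 * (m1 * m2 * m3) * \<Delta>\<^sup>2, -I, 1:]) t"
      by (simp add: algebra_simps power2_eq_square power3_eq_cube)
    finally show ?thesis .
  qed
  then show ?thesis using poly_eq_poly_eq_iff by blast
qed

lemma discriminant_jacobi:
  "I\<^sup>2 - 16 * (m1 * m2 * m3) * \<Delta>\<^sup>2
    = (\<alpha> * (z \<bullet> z) - \<beta> * (y \<bullet> y))\<^sup>2 + 4 * \<alpha> * \<beta> * (z \<bullet> y)\<^sup>2"
proof -
  have "16 * (m1 * m2 * m3) * \<Delta>\<^sup>2 = 4 * \<alpha> * \<beta> * ((z \<bullet> z) * (y \<bullet> y) - (z \<bullet> y)\<^sup>2)"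
    using area_sq_jacobi unfolding cross3_inner_cross3 by (simp add: power2_eq_square inner_commute)
  then show ?thesis unfolding inertia_jacobi by (simp add: power2_eq_square algebra_simps)
qed

lemma area_sq_le_inertia_sq: "16 * (m1 * m2 * m3) * \<Delta>\<^sup>2 \<le> I\<^sup>2"
proof -
  have "0 \<le> (\<alpha> * (z \<bullet> z) - \<beta> * (y \<bullet> y))\<^sup>2 + 4 * \<alpha> * \<beta> * (z \<bullet> y)\<^sup>2"
    using \<alpha>_pos \<beta>_pos by simp
  then show ?thesis using discriminant_jacobi by linarith
qed

lemma area_sq_eq_inertia_sq_iff:
  "16 * (m1 * m2 * m3) * \<Delta>\<^sup>2 = I\<^sup>2 \<longleftrightarrow> \<alpha> * (z \<bullet> z) = \<beta> * (y \<bullet> y) \<and> z \<bullet> y = 0"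
proof -
  have "16 * (m1 * m2 * m3) * \<Delta>\<^sup>2 = I\<^sup>2
      \<longleftrightarrow> (\<alpha> * (z \<bullet> z) - \<beta> * (y \<bullet> y))\<^sup>2 + 4 * \<alpha> * \<beta> * (z \<bullet> y)\<^sup>2 = 0"
    using discriminant_jacobi by linarith
  also have "\<dots> \<longleftrightarrow> \<alpha> * (z \<bullet> z) = \<beta> * (y \<bullet> y) \<and> z \<bullet> y = 0"
    using \<alpha>_pos \<beta>_pos by (simp add: add_nonneg_eq_0_iff)
  finally show ?thesis .
qed

lemma sorted_eigenvalues_inertia_matrix:
  defines "d \<equiv> sqrt (I\<^sup>2 - 16 * (m1 * m2 * m3) * \<Delta>\<^sup>2)"
  shows "sorted_eigenvalues (inertia_matrix m1 m2 m3 a1 a2 a3) = [(I - d) / 2, (I + d) / 2, I]"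
proof (rule sorted_eigenvalues_eq)
  have d2: "d\<^sup>2 = I\<^sup>2 - 4 * (4 * (m1 * m2 * m3) * \<Delta>\<^sup>2)"
    unfolding d_def using area_sq_le_inertia_sq by simp
  show "char_poly3 (inertia_matrix m1 m2 m3 a1 a2 a3)
      = [:-((I - d) / 2), 1:] * [:-((I + d) / 2), 1:] * [:-I, 1:]"
    unfolding char_poly_inertia_matrix monic_quadratic_factor[OF d2] by (rule mult.commute)
  have "d \<ge> 0" unfolding d_def using area_sq_le_inertia_sq by simp
  then show "(I - d) / 2 \<le> (I + d) / 2" by simp
  have "d \<le> sqrt (I\<^sup>2)" unfolding d_def using masses_pos by (intro real_sqrt_le_mono) simp
  then show "(I + d) / 2 \<le> I" using inertia_nonneg by simp
qed

lemma lambda1_eq_lambda2_iff: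
  "lambda1 m1 m2 m3 a1 a2 a3 = lambda2 m1 m2 m3 a1 a2 a3 \<longleftrightarrow> 16 * (m1 * m2 * m3) * \<Delta>\<^sup>2 = I\<^sup>2"
proof -
  have "lambda1 m1 m2 m3 a1 a2 a3 = lambda2 m1 m2 m3 a1 a2 a3
      \<longleftrightarrow> sqrt (I\<^sup>2 - 16 * (m1 * m2 * m3) * \<Delta>\<^sup>2) = 0"
    unfolding lambda1_def lambda2_def sorted_eigenvalues_inertia_matrix by auto
  then show ?thesis by auto
qed

lemma area_nonneg: "\<Delta> \<ge> 0"
  unfolding tri_area_def by simp

lemma area_le_max: "\<Delta> \<le> I / (4 * sqrt (m1 * m2 * m3))"
  using le_div_four_sqrt_iff(1)[of "m1 * m2 * m3"] area_sq_le_inertia_sq masses_pos inertia_nonneg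
    area_nonneg
  by simp

lemma area_eq_max_iff:
  "\<Delta> = I / (4 * sqrt (m1 * m2 * m3)) \<longleftrightarrow> 16 * (m1 * m2 * m3) * \<Delta>\<^sup>2 = I\<^sup>2"
  using le_div_four_sqrt_iff(2)[of "m1 * m2 * m3"] masses_pos inertia_nonneg area_nonneg by simp

lemma pole_defects_jacobi:
  defines "E \<equiv> \<alpha> * (z \<bullet> z) - \<beta> * (y \<bullet> y)"
  shows "m1 * (norm a1)\<^sup>2 - (1 - m1) / 2 * I
           = (m2 - m1 * m3) / (2 * (m1 + m2)) * E + 2 * m1 * m2 * m3 * (z \<bullet> y)"
    and "m2 * (norm a2)\<^sup>2 - (1 - m2) / 2 * I
           = (m1 - m2 * m3) / (2 * (m1 + m2)) * E - 2 * m1 * m2 * m3 * (z \<bullet> y)"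
    and "m3 * (norm a3)\<^sup>2 - (1 - m3) / 2 * I = - ((m1 + m2) / 2) * E"
proof -
  have m3: "m3 = 1 - m1 - m2" using mass_sum by simp
  have s: "m1 + m2 > 0" using masses_pos by simp
  have norm_sq:
    "m1 * (norm a1)\<^sup>2 = m1 * (m3\<^sup>2 * (y \<bullet> y) + 2 * m2 * m3 * (z \<bullet> y) + m2\<^sup>2 * (z \<bullet> z))"
    "m2 * (norm a2)\<^sup>2 = m2 * (m3\<^sup>2 * (y \<bullet> y) - 2 * m1 * m3 * (z \<bullet> y) + m1\<^sup>2 * (z \<bullet> z))"
    "m3 * (norm a3)\<^sup>2 = m3 * (m1 + m2)\<^sup>2 * (y \<bullet> y)"
    unfolding power2_norm_eq_inner a1_eq a2_eq a3_eq
    by (simp_all add: inner_add_left inner_add_right inner_diff_left inner_diff_right inner_commute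
        power2_eq_square; algebra)+
  show "m1 * (norm a1)\<^sup>2 - (1 - m1) / 2 * I
          = (m2 - m1 * m3) / (2 * (m1 + m2)) * E + 2 * m1 * m2 * m3 * (z \<bullet> y)"
       "m2 * (norm a2)\<^sup>2 - (1 - m2) / 2 * I
          = (m1 - m2 * m3) / (2 * (m1 + m2)) * E - 2 * m1 * m2 * m3 * (z \<bullet> y)"
       "m3 * (norm a3)\<^sup>2 - (1 - m3) / 2 * I = - ((m1 + m2) / 2) * E"
    using s unfolding norm_sq inertia_jacobi E_def \<alpha>_def \<beta>_def
    by (simp add: m3 field_simps; algebra)+
qed

lemma pole_iff_jacobi:
  "(m1 * (norm a1)\<^sup>2 = (1 - m1) / 2 * I \<and> m2 * (norm a2)\<^sup>2 = (1 - m2) / 2 * I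
      \<and> m3 * (norm a3)\<^sup>2 = (1 - m3) / 2 * I)
    \<longleftrightarrow> \<alpha> * (z \<bullet> z) = \<beta> * (y \<bullet> y) \<and> z \<bullet> y = 0"
  (is "?pole \<longleftrightarrow> ?E = ?F \<and> _")
proof
  assume ?pole
  then have "- ((m1 + m2) / 2) * (?E - ?F) = 0" using pole_defects_jacobi(3) by linarith
  then have "?E - ?F = 0" using masses_pos by simp
  moreover have "(m2 - m1 * m3) / (2 * (m1 + m2)) * (?E - ?F) + 2 * m1 * m2 * m3 * (z \<bullet> y) = 0"
    using \<open>?pole\<close> pole_defects_jacobi(1) by linarith
  ultimately show "?E = ?F \<and> z \<bullet> y = 0" using masses_pos by simp
next
  assume "?E = ?F \<and> z \<bullet> y = 0"
  then show ?pole using pole_defects_jacobi by simp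
qed

end

lemma m_triangle_jacobi_coordinates:
  assumes masses: "mass_ok m1 m2 m3" and centred: "m_triangle m1 m2 m3 a1 a2 a3"
  shows "jacobi_coordinates m1 m2 m3 a1 a2 a3
           (inverse (m1 + m2) *\<^sub>R (a2 - a1)) (inverse (m1 + m2) *\<^sub>R a3)"
proof
  have m3: "m3 *\<^sub>R a3 = - (m1 *\<^sub>R a1) - m2 *\<^sub>R a2" and s: "m1 + m2 \<noteq> 0"
    using masses centred unfolding mass_ok_def m_triangle_def
    by (auto simp: eq_neg_iff_add_eq_0 algebra_simps)
  have solve: "x = inverse (m1 + m2) *\<^sub>R v" if "(m1 + m2) *\<^sub>R x = v" for x v :: "real^3"
    using s that by auto
  have "a1 = inverse (m1 + m2) *\<^sub>R (- (m3 *\<^sub>R a3) - m2 *\<^sub>R (a2 - a1))"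
       "a2 = inverse (m1 + m2) *\<^sub>R (- (m3 *\<^sub>R a3) + m1 *\<^sub>R (a2 - a1))"
    by (rule solve, simp add: m3 algebra_simps)+
  then show "a1 = - (m3 *\<^sub>R inverse (m1 + m2) *\<^sub>R a3) - m2 *\<^sub>R inverse (m1 + m2) *\<^sub>R (a2 - a1)"
       "a2 = - (m3 *\<^sub>R inverse (m1 + m2) *\<^sub>R a3) + m1 *\<^sub>R inverse (m1 + m2) *\<^sub>R (a2 - a1)"
    by (simp_all add: algebra_simps)
  show "mass_ok m1 m2 m3" by (fact masses)
  show "a3 = (m1 + m2) *\<^sub>R inverse (m1 + m2) *\<^sub>R a3" using s by simp
qed

lemma exists_m_triangle_max_area:
  assumes masses: "mass_ok m1 m2 m3" and "I \<ge> 0"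
  shows "\<exists>b1 b2 b3. m_triangle m1 m2 m3 b1 b2 b3 \<and> inertia m1 m2 m3 b1 b2 b3 = I
           \<and> tri_area b1 b2 b3 = I / (4 * sqrt (m1 * m2 * m3))"
proof -
  define z :: "real^3" where "z = axis 1 (sqrt (I / (2 * (m1 * m2 * (m1 + m2)))))"
  define y :: "real^3" where "y = axis 2 (sqrt (I / (2 * (m3 * (m1 + m2)))))"
  interpret J: jacobi_coordinates m1 m2 m3
      "- (m3 *\<^sub>R y) - m2 *\<^sub>R z" "- (m3 *\<^sub>R y) + m1 *\<^sub>R z" "(m1 + m2) *\<^sub>R y" z y
    using masses by unfold_locales simp_all
  have "J.\<alpha> * (z \<bullet> z) = I / 2" "J.\<beta> * (y \<bullet> y) = I / 2" "z \<bullet> y = 0"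
    using J.\<alpha>_pos J.\<beta>_pos \<open>I \<ge> 0\<close>
    by (simp_all add: z_def y_def inner_axis_axis flip: J.\<alpha>_def J.\<beta>_def)
  then have "J.I = I" and "16 * (m1 * m2 * m3) * J.\<Delta>\<^sup>2 = J.I\<^sup>2"
    using J.inertia_jacobi J.area_sq_eq_inertia_sq_iff by simp_all
  then show ?thesis
    using J.m_triangle J.area_eq_max_iff by blast
qed

theorem mainTheorem13:
  fixes m1 m2 m3 :: real and a1 a2 a3 :: "real^3"
  assumes masses: "mass_ok m1 m2 m3"
    and mtri: "m_triangle m1 m2 m3 a1 a2 a3"
    and nonzero: "(a1, a2, a3) \<noteq> (0, 0, 0)"
    and nondeg: "tri_area a1 a2 a3 > 0"
  defines "I \<equiv> inertia m1 m2 m3 a1 a2 a3"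
  shows "((m1 * (norm a1)\<^sup>2 = (1 - m1) / 2 * I \<and> m2 * (norm a2)\<^sup>2 = (1 - m2) / 2 * I
            \<and> m3 * (norm a3)\<^sup>2 = (1 - m3) / 2 * I)
          \<longleftrightarrow> lambda1 m1 m2 m3 a1 a2 a3 = lambda2 m1 m2 m3 a1 a2 a3)
       \<and> (lambda1 m1 m2 m3 a1 a2 a3 = lambda2 m1 m2 m3 a1 a2 a3
          \<longleftrightarrow> tri_area a1 a2 a3 = I / (4 * sqrt (m1 * m2 * m3)))
       \<and> (\<forall>b1 b2 b3. m_triangle m1 m2 m3 b1 b2 b3 \<and> inertia m1 m2 m3 b1 b2 b3 = I
             \<longrightarrow> tri_area b1 b2 b3 \<le> I / (4 * sqrt (m1 * m2 * m3)))
       \<and> (\<exists>b1 b2 b3. m_triangle m1 m2 m3 b1 b2 b3 \<and> inertia m1 m2 m3 b1 b2 b3 = I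
             \<and> tri_area b1 b2 b3 = I / (4 * sqrt (m1 * m2 * m3)))"
proof -
  interpret J: jacobi_coordinates m1 m2 m3 a1 a2 a3
      "inverse (m1 + m2) *\<^sub>R (a2 - a1)" "inverse (m1 + m2) *\<^sub>R a3"
    using masses mtri by (rule m_triangle_jacobi_coordinates)
  have max_area: "\<forall>b1 b2 b3. m_triangle m1 m2 m3 b1 b2 b3 \<and> inertia m1 m2 m3 b1 b2 b3 = I
      \<longrightarrow> tri_area b1 b2 b3 \<le> I / (4 * sqrt (m1 * m2 * m3))"
    using jacobi_coordinates.area_le_max[OF m_triangle_jacobi_coordinates[OF masses]] by blast
  show ?thesis
    using max_area exists_m_triangle_max_area[OF masses J.inertia_nonneg]
    unfolding I_def J.pole_iff_jacobi J.lambda1_eq_lambda2_iff J.area_eq_max_iff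
      J.area_sq_eq_inertia_sq_iff
    by blast
qed

end
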